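(* Let $g:\mathbb{R}^m\to\mathbb{R}$ be a continuous convex function and $X\subset\mathbb{R}^m$ a closed convex set, and suppose $\mathbf{X}^*=\{x\in X: g(x)\le0\}$ is non-empty. Assume there is $K\ge0$ with $\|\nabla g^+(x)\|\le K$ for all $x$. Let $\{\alpha(t)\},\{\beta(t)\}$ satisfy (a) $\alpha(t)\in[0,1]$, $\sum_{t=0}^\infty\alpha(t)=\infty$, $\sum_{t=0}^\infty\alpha^2(t)<\infty$; (b) $\beta(t)\ge0$, $\sum_{t=0}^\infty\beta(t)=\infty$, $\sum_{t=0}^\infty\beta^2(t)<\infty$. Define the iteration $$\xi(t)=x(t)-\beta(t)\nabla g^+(x(t)),\quad \varphi(t)=\alpha(t)\big(\xi(t)-P_X(\xi(t))\big),\quad x(t+1)=\xi(t)-\varphi(t).$$ Then $x(t)$ converges to a vector $x^*\in\mathbf{X}^*$.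
   Context: $g^+(x)=\max[g(x),0]$; $\nabla g^+(x)$ denotes a subgradient of $g^+$ at $x$; $P_X$ is the Euclidean projection onto $X$. *)

theory Defs
  imports "HOL-Analysis.Analysis"
begin

definition pos_part_fun :: "('a \<Rightarrow> real) \<Rightarrow> 'a \<Rightarrow> real" where
  "pos_part_fun g x = max (g x) 0"

definition is_subgradient :: "('a::real_inner \<Rightarrow> real) \<Rightarrow> 'a \<Rightarrow> 'a \<Rightarrow> bool" where
  "is_subgradient f x d \<longleftrightarrow> (\<forall>y. f y \<ge> f x + inner d (y - x))"

end

theory Submission
  imports Defs
begin

text \<open>For every feasible point z the iteration is quasi-Fejer monotone:
  ||x(t+1) - z||^2 <= ||x(t) - z||^2 - 2 beta(t) g^+(x(t)) - alpha(t) d(xi(t), X)^2 + beta(t)^2 K^2.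
  By a deterministic Robbins--Siegmund argument ||x(t) - z|| converges and the series of
  beta(t) g^+(x(t)) and alpha(t) d(xi(t), X)^2 converge. As the step sizes are not summable,
  g^+(x(t)) and d(x(t), X) are each small infinitely often; they are small at the same time
  because along a stretch on which g^+ stays large the steps are so short that neither
  quantity can change much. A cluster point along such times is feasible, and quasi-Fejer
  monotonicity with respect to it forces the whole sequence to converge to it.\<close>

lemma robbins_siegmund_deterministic:
  fixes a b c :: "nat \<Rightarrow> real"
  assumes a_nonneg: "\<And>t. 0 \<le> a t" and b_nonneg: "\<And>t. 0 \<le> b t" and c_nonneg: "\<And>t. 0 \<le> c t"
    and summable_c: "summable c"
    and step: "\<And>t. a (Suc t) \<le> a t - b t + c t"
  shows "summable b" and "convergent a"
proof -
  have partial: "a n + (\<Sum>t<n. b t) \<le> a 0 + (\<Sum>t<n. c t)" for n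
  proof (induction n)
    case (Suc n)
    then show ?case using step[of n] by simp
  qed simp
  have c_le: "(\<Sum>t<n. c t) \<le> suminf c" for n
    using sum_le_suminf[OF summable_c, of "{..<n}"] c_nonneg by auto
  show summable_b: "summable b"
  proof (rule summableI_nonneg_bounded[where x = "a 0 + suminf c"])
    show "(\<Sum>i<n. b i) \<le> a 0 + suminf c" for n
      using partial[of n] c_le[of n] a_nonneg[of n] by linarith
  qed (use b_nonneg in auto)
  define w where "w n = a n + (\<Sum>t<n. b t) - (\<Sum>t<n. c t)" for n
  have "decseq w"
  proof (rule decseq_SucI)
    show "w (Suc n) \<le> w n" for n
      using step[of n] by (simp add: w_def)
  qed
  moreover have "- suminf c \<le> w n" for n
    using c_le[of n] a_nonneg[of n] sum_nonneg[of "{..<n}" b] b_nonneg unfolding w_def by force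
  ultimately obtain L where "w \<longlonglongrightarrow> L"
    using decseq_convergent by blast
  then have "(\<lambda>n. w n - (\<Sum>t<n. b t) + (\<Sum>t<n. c t)) \<longlonglongrightarrow> L - suminf b + suminf c"
    by (intro tendsto_intros summable_LIMSEQ summable_b summable_c)
  then show "convergent a"
    unfolding w_def convergent_def by auto
qed

lemma sum_telescope_le:
  fixes f h :: "nat \<Rightarrow> real"
  assumes "s \<le> u" and "\<And>t. f t - f (Suc t) \<le> h t"
  shows "f s - f u \<le> (\<Sum>t=s..<u. h t)"
proof -
  have "f s - f u = (\<Sum>t=s..<u. f t - f (Suc t))"
    using sum_Suc_diff'[OF assms(1), of f] by (simp add: sum_subtractf)
  also have "\<dots> \<le> (\<Sum>t=s..<u. h t)"
    using assms(2) by (rule sum_mono)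
  finally show ?thesis .
qed

lemma frequently_less_if_weighted_summable:
  fixes w f :: "nat \<Rightarrow> real"
  assumes w_nonneg: "\<And>t. 0 \<le> w t" and "\<not> summable w"
    and "summable (\<lambda>t. w t * f t)" and "\<epsilon> > 0"
  shows "\<exists>\<^sub>F t in sequentially. f t < \<epsilon>"
proof (rule ccontr)
  assume "\<not> ?thesis"
  then have "\<forall>\<^sub>F t in sequentially. \<epsilon> \<le> f t"
    by (simp add: not_frequently not_less)
  then have "\<forall>\<^sub>F t in sequentially. norm (w t) \<le> w t * f t / \<epsilon>"
    by eventually_elim (use w_nonneg \<open>\<epsilon> > 0\<close> in \<open>auto simp: field_simps intro: mult_right_mono\<close>)
  then have "summable w"
    by (rule summable_comparison_test_ev) (intro summable_divide assms(3))
  with \<open>\<not> summable w\<close> show False ..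
qed

lemma drift_along_stretch_le:
  fixes \<alpha> \<beta> G D E :: "nat \<Rightarrow> real"
  assumes K_nonneg: "0 \<le> K" and D_nonneg: "\<And>t. 0 \<le> D t"
    and D_Suc: "\<And>t. D (Suc t) \<le> D t - \<alpha> t * E t + \<beta> t * K"
    and G_Suc: "\<And>t. G t - G (Suc t) \<le> K * (\<beta> t * K + \<alpha> t * E t)"
    and "s \<le> u"
  shows "G s - G u \<le> K * D s + 2 * K\<^sup>2 * (\<Sum>t=s..<u. \<beta> t)"
proof -
  have "(- D s) - (- D u) \<le> (\<Sum>t=s..<u. \<beta> t * K - \<alpha> t * E t)"
    by (rule sum_telescope_le[OF \<open>s \<le> u\<close>, where f = "\<lambda>t. - D t"]) (use D_Suc in \<open>simp add: algebra_simps\<close>)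
  also have "\<dots> = K * (\<Sum>t=s..<u. \<beta> t) - (\<Sum>t=s..<u. \<alpha> t * E t)"
    by (simp add: sum_subtractf sum_distrib_left mult.commute)
  finally have sum_\<alpha>E: "(\<Sum>t=s..<u. \<alpha> t * E t) \<le> D s + K * (\<Sum>t=s..<u. \<beta> t)"
    using D_nonneg[of u] by simp
  have "G s - G u \<le> (\<Sum>t=s..<u. K * (\<beta> t * K + \<alpha> t * E t))"
    by (rule sum_telescope_le[OF \<open>s \<le> u\<close>, where f = G]) (rule G_Suc)
  also have "\<dots> = K\<^sup>2 * (\<Sum>t=s..<u. \<beta> t) + K * (\<Sum>t=s..<u. \<alpha> t * E t)"
    by (simp add: sum.distrib sum_distrib_left algebra_simps power2_eq_square)
  also have "\<dots> \<le> K\<^sup>2 * (\<Sum>t=s..<u. \<beta> t) + K * (D s + K * (\<Sum>t=s..<u. \<beta> t))"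
    using sum_\<alpha>E K_nonneg by (intro add_left_mono mult_left_mono)
  also have "\<dots> = K * D s + 2 * K\<^sup>2 * (\<Sum>t=s..<u. \<beta> t)"
    by (simp add: algebra_simps power2_eq_square)
  finally show ?thesis .
qed

lemma frequently_dist_small:
  fixes \<alpha> \<beta> D E :: "nat \<Rightarrow> real"
  assumes \<alpha>_nonneg: "\<And>t. 0 \<le> \<alpha> t" and \<alpha>_div: "\<not> summable \<alpha>"
    and summable_\<alpha>E: "summable (\<lambda>t. \<alpha> t * (E t)\<^sup>2)"
    and \<beta>_lim: "\<beta> \<longlonglongrightarrow> 0" and D_le_E: "\<And>t. D t \<le> E t + \<beta> t * K" and "\<delta> > 0"
  shows "\<exists>\<^sub>F t in sequentially. D t < \<delta>"
proof -
  have "\<exists>\<^sub>F t in sequentially. (E t)\<^sup>2 < (\<delta> / 2)\<^sup>2"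
    using frequently_less_if_weighted_summable[OF \<alpha>_nonneg \<alpha>_div summable_\<alpha>E] \<open>\<delta> > 0\<close> by simp
  moreover have "\<forall>\<^sub>F t in sequentially. \<beta> t * K < \<delta> / 2"
    using \<beta>_lim \<open>\<delta> > 0\<close> by (intro order_tendstoD(2)) (auto intro: tendsto_mult_left_zero)
  ultimately show ?thesis
  proof (elim frequently_rev_mp, eventually_elim)
    case (elim t)
    then show ?case
      using D_le_E[of t] \<open>\<delta> > 0\<close> by (auto dest!: power2_less_imp_less)
  qed
qed

lemma eventually_short_stretch_to_small:
  fixes \<beta> G :: "nat \<Rightarrow> real"
  assumes \<beta>_nonneg: "\<And>t. 0 \<le> \<beta> t" and \<beta>_div: "\<not> summable \<beta>"
    and summable_\<beta>G: "summable (\<lambda>t. \<beta> t * G t)" and "\<epsilon> > 0" and "\<rho> > 0"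
  shows "\<forall>\<^sub>F s in sequentially. \<exists>u\<ge>s. G u < \<epsilon> \<and> (\<Sum>t=s..<u. \<beta> t) < \<rho>"
proof -
  obtain N where tail_\<beta>G: "\<And>s u. N \<le> s \<Longrightarrow> (\<Sum>t=s..<u. \<beta> t * G t) < \<epsilon> * \<rho>"
    using summable_\<beta>G \<open>\<epsilon> > 0\<close> \<open>\<rho> > 0\<close> unfolding summable_Cauchy
    by (metis mult_pos_pos real_norm_def abs_less_iff)
  have "\<exists>u\<ge>s. G u < \<epsilon> \<and> (\<Sum>t=s..<u. \<beta> t) < \<rho>" if "N \<le> s" for s
  proof -
    have "\<exists>u\<ge>s. G u < \<epsilon>"
      using frequently_less_if_weighted_summable[OF \<beta>_nonneg \<beta>_div summable_\<beta>G \<open>\<epsilon> > 0\<close>]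
      unfolding frequently_sequentially by blast
    then obtain u where u: "s \<le> u" "G u < \<epsilon>" and before_u: "\<And>t. t < u \<Longrightarrow> \<not> (s \<le> t \<and> G t < \<epsilon>)"
      unfolding exists_least_iff[of "\<lambda>u. s \<le> u \<and> G u < \<epsilon>"] by blast
    have "\<epsilon> \<le> G t" if "s \<le> t" "t < u" for t
      using before_u[OF that(2)] that(1) by simp
    then have "\<epsilon> * (\<Sum>t=s..<u. \<beta> t) \<le> (\<Sum>t=s..<u. \<beta> t * G t)"
      unfolding sum_distrib_left
      by (intro sum_mono) (use mult_right_mono \<beta>_nonneg in \<open>fastforce simp: mult.commute\<close>)
    then have "(\<Sum>t=s..<u. \<beta> t) < \<rho>"
      using tail_\<beta>G[OF \<open>N \<le> s\<close>, of u] \<open>\<epsilon> > 0\<close> by (meson mult_less_cancel_left_pos order_le_less_trans)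
    with u show ?thesis
      by blast
  qed
  then show ?thesis
    unfolding eventually_sequentially by blast
qed

lemma frequently_both_small:
  fixes \<alpha> \<beta> G D E :: "nat \<Rightarrow> real"
  assumes K_nonneg: "0 \<le> K"
    and \<alpha>_nonneg: "\<And>t. 0 \<le> \<alpha> t" and \<alpha>_div: "\<not> summable \<alpha>"
    and \<beta>_nonneg: "\<And>t. 0 \<le> \<beta> t" and \<beta>_div: "\<not> summable \<beta>" and \<beta>_lim: "\<beta> \<longlonglongrightarrow> 0"
    and summable_\<beta>G: "summable (\<lambda>t. \<beta> t * G t)"
    and summable_\<alpha>E: "summable (\<lambda>t. \<alpha> t * (E t)\<^sup>2)"
    and D_nonneg: "\<And>t. 0 \<le> D t"
    and D_le_E: "\<And>t. D t \<le> E t + \<beta> t * K"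
    and D_Suc: "\<And>t. D (Suc t) \<le> D t - \<alpha> t * E t + \<beta> t * K"
    and G_Suc: "\<And>t. G t - G (Suc t) \<le> K * (\<beta> t * K + \<alpha> t * E t)"
    and "\<eta> > 0"
  shows "\<exists>\<^sub>F t in sequentially. G t < \<eta> \<and> D t < \<eta>"
proof (rule ccontr)
  assume "\<not> ?thesis"
  then have large: "\<forall>\<^sub>F t in sequentially. \<eta> \<le> G t \<or> \<eta> \<le> D t"
    by (simp add: not_frequently not_less)
  define \<epsilon> where "\<epsilon> = \<eta> / 2"
  define c where "c = 2 * K\<^sup>2 + K + 1"
  define \<delta> where "\<delta> = \<epsilon> / c"
  have "c \<ge> 1"
    using K_nonneg by (simp add: c_def)
  have "\<epsilon> > 0"
    using \<open>\<eta> > 0\<close> by (simp add: \<epsilon>_def)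
  then have "\<delta> > 0" and "\<delta> \<le> \<eta>"
    using \<open>c \<ge> 1\<close> by (auto simp: \<delta>_def \<epsilon>_def field_simps)
  have "(2 * K\<^sup>2 + K) * \<delta> = c * \<delta> - \<delta>"
    by (simp add: c_def algebra_simps)
  also have "c * \<delta> = \<epsilon>"
    using \<open>c \<ge> 1\<close> by (simp add: \<delta>_def)
  finally have drift_small: "(2 * K\<^sup>2 + K) * \<delta> < \<epsilon>"
    using \<open>\<delta> > 0\<close> by simp
  \<comment> \<open>At a late step \<open>s\<close> with \<open>D s < \<delta>\<close> we have \<open>G s \<ge> \<eta>\<close>, yet \<open>G\<close> drops below \<open>\<epsilon>\<close> after
    steps of total size less than \<open>\<delta>\<close>; the drift bound forbids such a large drop.\<close>
  have "\<exists>\<^sub>F s in sequentially. D s < \<delta> \<and> \<eta> \<le> G s \<and> (\<exists>u\<ge>s. G u < \<epsilon> \<and> (\<Sum>t=s..<u. \<beta> t) < \<delta>)"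
    using frequently_dist_small[OF \<alpha>_nonneg \<alpha>_div summable_\<alpha>E \<beta>_lim D_le_E \<open>\<delta> > 0\<close>] large
      eventually_short_stretch_to_small[OF \<beta>_nonneg \<beta>_div summable_\<beta>G \<open>\<epsilon> > 0\<close> \<open>\<delta> > 0\<close>]
    by (elim frequently_rev_mp, eventually_elim) (use \<open>\<delta> \<le> \<eta>\<close> in auto)
  then obtain s u where "D s < \<delta>" "\<eta> \<le> G s" "s \<le> u" "G u < \<epsilon>" "(\<Sum>t=s..<u. \<beta> t) < \<delta>"
    by (auto dest: frequently_ex)
  have "G s - G u \<le> K * D s + 2 * K\<^sup>2 * (\<Sum>t=s..<u. \<beta> t)"
    using drift_along_stretch_le[where \<alpha> = \<alpha> and \<beta> = \<beta> and E = E, OF K_nonneg D_nonneg D_Suc G_Suc \<open>s \<le> u\<close>] .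
  also have "\<dots> \<le> K * \<delta> + 2 * K\<^sup>2 * \<delta>"
    using \<open>D s < \<delta>\<close> \<open>(\<Sum>t=s..<u. \<beta> t) < \<delta>\<close> K_nonneg by (intro add_mono mult_left_mono) auto
  also have "\<dots> = (2 * K\<^sup>2 + K) * \<delta>"
    by (simp add: algebra_simps)
  finally show False
    using drift_small \<open>\<eta> \<le> G s\<close> \<open>G u < \<epsilon>\<close> by (simp add: \<epsilon>_def)
qed

lemma subgradient_step_dist_le:
  fixes y v z :: "'a::real_inner"
  assumes "is_subgradient f y v" and "norm v \<le> K" and "0 \<le> b"
  shows "(dist (y - b *\<^sub>R v) z)\<^sup>2 \<le> (dist y z)\<^sup>2 - 2 * b * (f y - f z) + b\<^sup>2 * K\<^sup>2"
proof -
  have "f y - f z \<le> inner v (y - z)"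
    using assms(1) unfolding is_subgradient_def by (auto simp: inner_diff_right dest: spec[of _ z])
  then have "2 * b * (f y - f z) \<le> 2 * b * inner v (y - z)"
    using assms(3) by (simp add: mult_left_mono)
  moreover have "(norm v)\<^sup>2 \<le> K\<^sup>2"
    using assms(2) by (simp add: power_mono)
  then have "b\<^sup>2 * (norm v)\<^sup>2 \<le> b\<^sup>2 * K\<^sup>2"
    by (simp add: mult_left_mono)
  moreover have "(dist (y - b *\<^sub>R v) z)\<^sup>2 = (dist y z)\<^sup>2 - 2 * b * inner v (y - z) + b\<^sup>2 * (norm v)\<^sup>2"
    unfolding dist_norm power2_norm_eq_inner
    by (simp add: inner_diff inner_commute algebra_simps power2_eq_square)
  ultimately show ?thesis
    by linarith
qed

lemma subgradient_decrease_le: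
  fixes y v w :: "'a::real_inner"
  assumes "is_subgradient f y v" and "norm v \<le> K"
  shows "f y - f w \<le> K * dist y w"
proof -
  have "f y - f w \<le> inner v (y - w)"
    using assms(1) unfolding is_subgradient_def by (auto simp: inner_diff_right dest: spec[of _ w])
  also have "\<dots> \<le> norm v * norm (y - w)"
    by (rule norm_cauchy_schwarz)
  also have "\<dots> \<le> K * dist y w"
    using assms(2) by (simp add: dist_norm mult_right_mono)
  finally show ?thesis .
qed

lemma infdist_eq_dist_closest_point:
  assumes "closed X" and "X \<noteq> {}"
  shows "infdist y X = dist y (closest_point X y)"
  using assms by (simp add: infdist_eq_setdist setdist_closest_point)

lemma relaxed_projection_dist_le:
  fixes y z :: "'a::euclidean_space"
  assumes "closed X" and "convex X" and "z \<in> X" and "0 \<le> a" and "a \<le> 1"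
  shows "(dist (y - a *\<^sub>R (y - closest_point X y)) z)\<^sup>2 \<le> (dist y z)\<^sup>2 - a * (infdist y X)\<^sup>2"
proof -
  define p where "p = closest_point X y"
  have E: "infdist y X = norm (y - p)"
    using infdist_eq_dist_closest_point[OF assms(1)] assms(3) by (auto simp: p_def dist_norm)
  have "inner (y - p) (z - p) \<le> 0"
    unfolding p_def by (rule closest_point_dot[OF assms(2,1,3)])
  then have "(norm (y - p))\<^sup>2 \<le> inner (y - z) (y - p)"
    by (simp add: power2_norm_eq_inner inner_diff inner_commute algebra_simps)
  then have "2 * a * (norm (y - p))\<^sup>2 \<le> 2 * a * inner (y - z) (y - p)"
    using assms(4) by (simp add: mult_left_mono)
  moreover have "a\<^sup>2 * (norm (y - p))\<^sup>2 \<le> a * (norm (y - p))\<^sup>2"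
    using assms(4,5) by (simp add: power2_eq_square mult_right_mono mult_left_le_one_le)
  moreover have "(dist (y - a *\<^sub>R (y - p)) z)\<^sup>2
      = (dist y z)\<^sup>2 - 2 * a * inner (y - z) (y - p) + a\<^sup>2 * (norm (y - p))\<^sup>2"
    unfolding dist_norm power2_norm_eq_inner
    by (simp add: inner_diff inner_commute algebra_simps power2_eq_square)
  ultimately show ?thesis
    unfolding E p_def[symmetric] by linarith
qed

lemma cluster_point_where_small:
  fixes x :: "nat \<Rightarrow> 'a::heine_borel" and f :: "'a \<Rightarrow> real"
  assumes "bounded (range x)" and f_cont: "continuous_on UNIV f"
    and small: "\<And>\<eta>. \<eta> > 0 \<Longrightarrow> \<exists>\<^sub>F t in sequentially. f (x t) < \<eta>"
  shows "\<exists>l r. strict_mono r \<and> (x \<circ> r) \<longlonglongrightarrow> l \<and> f l \<le> 0"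
proof -
  have "\<exists>t'>t. f (x t') < inverse (Suc n)" for t n
  proof -
    have "\<exists>t'\<ge>Suc t. f (x t') < inverse (Suc n)"
      using small[of "inverse (Suc n)"] unfolding frequently_sequentially by simp
    then show ?thesis
      by (auto simp: Suc_le_eq)
  qed
  then obtain r where r_small: "\<And>n. f (x (r n)) < inverse (Suc n)" and "strict_mono r"
    using dependent_nat_choice[of "\<lambda>n t. f (x t) < inverse (Suc n)" "\<lambda>_ t t'. t < t'"]
    unfolding strict_mono_Suc_iff by blast
  moreover obtain l s where "strict_mono s" and lim: "(x \<circ> r \<circ> s) \<longlonglongrightarrow> l"
  proof -
    have "bounded (range (x \<circ> r))"
      using assms(1) by (rule bounded_subset) auto
    then show ?thesis
      using bounded_imp_convergent_subsequence that by blast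
  qed
  moreover have "f l \<le> 0"
  proof (rule LIMSEQ_le)
    have "isCont f l"
      using f_cont by (simp add: continuous_on_eq_continuous_at)
    then show "(\<lambda>n. f ((x \<circ> r \<circ> s) n)) \<longlonglongrightarrow> f l"
      using lim by (rule isCont_tendsto_compose)
    show "(\<lambda>n. inverse (real (Suc n))) \<longlonglongrightarrow> 0"
      by (rule LIMSEQ_inverse_real_of_nat)
    have "f ((x \<circ> r \<circ> s) n) \<le> inverse (real (Suc n))" for n
    proof -
      have "f ((x \<circ> r \<circ> s) n) < inverse (real (Suc (s n)))"
        using r_small by simp
      also have "\<dots> \<le> inverse (real (Suc n))"
        using seq_suble[OF \<open>strict_mono s\<close>, of n] by (simp add: le_imp_inverse_le)
      finally show ?thesis by simp
    qed
    then show "\<exists>N. \<forall>n\<ge>N. f ((x \<circ> r \<circ> s) n) \<le> inverse (real (Suc n))"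
      by blast
  qed
  ultimately show ?thesis
    by (intro exI[of _ l] exI[of _ "r \<circ> s"]) (simp add: strict_mono_o o_assoc)
qed

lemma LIMSEQ_if_convergent_dist_subseq:
  fixes x :: "nat \<Rightarrow> 'a::metric_space"
  assumes "convergent (\<lambda>t. dist (x t) l)" and "strict_mono r" and "(x \<circ> r) \<longlonglongrightarrow> l"
  shows "x \<longlonglongrightarrow> l"
proof -
  obtain L where L: "(\<lambda>t. dist (x t) l) \<longlonglongrightarrow> L"
    using assms(1) unfolding convergent_def by blast
  have "(\<lambda>t. dist (x (r t)) l) \<longlonglongrightarrow> L"
    using LIMSEQ_subseq_LIMSEQ[OF L assms(2)] by (simp add: comp_def)
  moreover have "(\<lambda>t. dist (x (r t)) l) \<longlonglongrightarrow> 0"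
    using tendsto_dist_iff[THEN iffD1, OF assms(3)] by (simp add: comp_def)
  ultimately have "L = 0"
    using LIMSEQ_unique by blast
  with L show ?thesis
    using tendsto_dist_iff by blast
qed

locale projected_subgradient_iteration =
  fixes g :: "'a::euclidean_space \<Rightarrow> real" and X :: "'a set" and dg :: "'a \<Rightarrow> 'a" and K :: real
    and \<alpha> \<beta> :: "nat \<Rightarrow> real" and x \<xi> :: "nat \<Rightarrow> 'a"
  assumes X_closed: "closed X" and X_convex: "convex X" and X_nonempty: "X \<noteq> {}"
    and dg_subgrad: "\<And>y. is_subgradient (pos_part_fun g) y (dg y)"
    and dg_bound: "\<And>y. norm (dg y) \<le> K"
    and \<alpha>_range: "\<And>t. 0 \<le> \<alpha> t \<and> \<alpha> t \<le> 1"
    and \<beta>_nonneg: "\<And>t. 0 \<le> \<beta> t"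
    and \<xi>_def: "\<And>t. \<xi> t = x t - \<beta> t *\<^sub>R dg (x t)"
    and x_step: "\<And>t. x (Suc t) = \<xi> t - \<alpha> t *\<^sub>R (\<xi> t - closest_point X (\<xi> t))"
begin

abbreviation "violation t \<equiv> pos_part_fun g (x t)"
abbreviation "dist_X t \<equiv> infdist (x t) X"
abbreviation "dist_X_\<xi> t \<equiv> infdist (\<xi> t) X"

lemma K_nonneg: "0 \<le> K"
  using dg_bound norm_ge_zero order_trans by blast

lemma dist_x_\<xi>_le: "dist (x t) (\<xi> t) \<le> \<beta> t * K"
  using dg_bound[of "x t"] \<beta>_nonneg[of t] by (simp add: \<xi>_def dist_norm mult_left_mono)

lemma dist_X_le: "dist_X t \<le> dist_X_\<xi> t + \<beta> t * K"
  using infdist_triangle[of "x t" X "\<xi> t"] dist_x_\<xi>_le[of t] by linarith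

lemma dist_X_\<xi>_le: "dist_X_\<xi> t \<le> dist_X t + \<beta> t * K"
  using infdist_triangle[of "\<xi> t" X "x t"] dist_x_\<xi>_le[of t] by (simp add: dist_commute)

lemma dist_X_Suc_le: "dist_X (Suc t) \<le> (1 - \<alpha> t) * dist_X_\<xi> t"
proof -
  have "dist_X (Suc t) \<le> dist (x (Suc t)) (closest_point X (\<xi> t))"
    by (rule infdist_le[OF closest_point_in_set[OF X_closed X_nonempty]])
  also have "x (Suc t) - closest_point X (\<xi> t) = (1 - \<alpha> t) *\<^sub>R (\<xi> t - closest_point X (\<xi> t))"
    by (simp add: x_step algebra_simps)
  then have "dist (x (Suc t)) (closest_point X (\<xi> t)) = (1 - \<alpha> t) * dist (\<xi> t) (closest_point X (\<xi> t))"
    using \<alpha>_range[of t] by (simp add: dist_norm)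
  finally show ?thesis
    by (simp add: infdist_eq_dist_closest_point[OF X_closed X_nonempty])
qed

lemma dist_X_Suc_le_descent: "dist_X (Suc t) \<le> dist_X t - \<alpha> t * dist_X_\<xi> t + \<beta> t * K"
  using dist_X_Suc_le[of t] dist_X_\<xi>_le[of t] by (simp add: algebra_simps)

lemma violation_decrease_le: "violation t - violation (Suc t) \<le> K * (\<beta> t * K + \<alpha> t * dist_X_\<xi> t)"
proof -
  have "x t - x (Suc t) = \<beta> t *\<^sub>R dg (x t) + \<alpha> t *\<^sub>R (\<xi> t - closest_point X (\<xi> t))"
    by (simp add: x_step \<xi>_def)
  then have "dist (x t) (x (Suc t))
      \<le> norm (\<beta> t *\<^sub>R dg (x t)) + norm (\<alpha> t *\<^sub>R (\<xi> t - closest_point X (\<xi> t)))"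
    unfolding dist_norm by (metis norm_triangle_ineq)
  also have "\<dots> \<le> \<beta> t * K + \<alpha> t * dist_X_\<xi> t"
    using dg_bound[of "x t"] \<beta>_nonneg[of t] \<alpha>_range[of t]
    by (simp add: dist_norm infdist_eq_dist_closest_point[OF X_closed X_nonempty] mult_left_mono)
  finally have "dist (x t) (x (Suc t)) \<le> \<beta> t * K + \<alpha> t * dist_X_\<xi> t" .
  then show ?thesis
    using subgradient_decrease_le[OF dg_subgrad dg_bound, of "x t" "x (Suc t)"] K_nonneg
    by (meson mult_left_mono order_trans)
qed

lemma violation_nonneg: "0 \<le> violation t"
  by (simp add: pos_part_fun_def)

lemma fejer_step:
  assumes "z \<in> X" and "g z \<le> 0"
  shows "(dist (x (Suc t)) z)\<^sup>2
    \<le> (dist (x t) z)\<^sup>2 - (2 * \<beta> t * violation t + \<alpha> t * (dist_X_\<xi> t)\<^sup>2) + (\<beta> t)\<^sup>2 * K\<^sup>2"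
proof -
  have "pos_part_fun g z = 0"
    using assms(2) by (simp add: pos_part_fun_def)
  then have "(dist (\<xi> t) z)\<^sup>2 \<le> (dist (x t) z)\<^sup>2 - 2 * \<beta> t * violation t + (\<beta> t)\<^sup>2 * K\<^sup>2"
    using subgradient_step_dist_le[OF dg_subgrad dg_bound \<beta>_nonneg, of "x t" t z] by (simp add: \<xi>_def)
  moreover have "(dist (x (Suc t)) z)\<^sup>2 \<le> (dist (\<xi> t) z)\<^sup>2 - \<alpha> t * (dist_X_\<xi> t)\<^sup>2"
    using relaxed_projection_dist_le[OF X_closed X_convex assms(1)] \<alpha>_range[of t] by (simp add: x_step)
  ultimately show ?thesis
    by linarith
qed

lemma fejer_monotone:
  assumes "z \<in> X" and "g z \<le> 0" and "summable (\<lambda>t. (\<beta> t)\<^sup>2)"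
  shows "summable (\<lambda>t. \<beta> t * violation t)" and "summable (\<lambda>t. \<alpha> t * (dist_X_\<xi> t)\<^sup>2)"
    and "convergent (\<lambda>t. dist (x t) z)"
proof -
  have descent_nonneg: "0 \<le> 2 * \<beta> t * violation t + \<alpha> t * (dist_X_\<xi> t)\<^sup>2" for t
    using \<beta>_nonneg[of t] \<alpha>_range[of t] violation_nonneg[of t] by simp
  have descent: "summable (\<lambda>t. 2 * \<beta> t * violation t + \<alpha> t * (dist_X_\<xi> t)\<^sup>2)"
    and conv: "convergent (\<lambda>t. (dist (x t) z)\<^sup>2)"
    by (rule robbins_siegmund_deterministic[OF _ descent_nonneg _ summable_mult2[OF assms(3)]
          fejer_step[OF assms(1,2)]]; simp)+
  show "summable (\<lambda>t. \<beta> t * violation t)"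
    by (rule summable_comparison_test'[OF descent, where N = 0])
      (use \<beta>_nonneg \<alpha>_range violation_nonneg in simp)
  show "summable (\<lambda>t. \<alpha> t * (dist_X_\<xi> t)\<^sup>2)"
    by (rule summable_comparison_test'[OF descent, where N = 0])
      (use \<beta>_nonneg \<alpha>_range violation_nonneg in simp)
  from conv obtain L where "(\<lambda>t. (dist (x t) z)\<^sup>2) \<longlonglongrightarrow> L"
    unfolding convergent_def by blast
  then have "(\<lambda>t. sqrt ((dist (x t) z)\<^sup>2)) \<longlonglongrightarrow> sqrt L"
    by (rule tendsto_real_sqrt)
  then show "convergent (\<lambda>t. dist (x t) z)"
    unfolding convergent_def by auto
qed

lemma converges_to_feasible_point:
  assumes g_cont: "continuous_on UNIV g" and feasible: "\<exists>z\<in>X. g z \<le> 0"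
    and \<alpha>_div: "\<not> summable \<alpha>" and \<beta>_div: "\<not> summable \<beta>" and \<beta>_sq: "summable (\<lambda>t. (\<beta> t)\<^sup>2)"
  shows "\<exists>x_star. x_star \<in> X \<and> g x_star \<le> 0 \<and> x \<longlonglongrightarrow> x_star"
proof -
  obtain z where "z \<in> X" "g z \<le> 0"
    using feasible by blast
  note fejer = fejer_monotone[OF this \<beta>_sq]
  obtain M where "\<And>t. dist (x t) z \<le> M"
    using convergent_imp_Bseq[OF fejer(3)] unfolding Bseq_def by auto
  then have "range x \<subseteq> cball z M"
    by (auto simp: dist_commute)
  then have "bounded (range x)"
    using bounded_cball bounded_subset by blast
  have "\<beta> \<longlonglongrightarrow> 0"
    using summable_LIMSEQ_zero[OF \<beta>_sq] by simp
  have \<alpha>_nonneg: "\<And>t. 0 \<le> \<alpha> t"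
    using \<alpha>_range by simp
  have "\<exists>\<^sub>F t in sequentially. max (violation t) (dist_X t) < \<eta>" if "\<eta> > 0" for \<eta>
    using frequently_both_small[OF K_nonneg \<alpha>_nonneg \<alpha>_div \<beta>_nonneg \<beta>_div \<open>\<beta> \<longlonglongrightarrow> 0\<close> fejer(1,2)
        infdist_nonneg dist_X_le dist_X_Suc_le_descent violation_decrease_le that]
    by simp
  moreover have "continuous_on UNIV (\<lambda>y. max (pos_part_fun g y) (infdist y X))"
    using g_cont unfolding pos_part_fun_def by (intro continuous_intros)
  ultimately obtain l r where "strict_mono r" "(x \<circ> r) \<longlonglongrightarrow> l"
      and "max (pos_part_fun g l) (infdist l X) \<le> 0"
    using cluster_point_where_small[OF \<open>bounded (range x)\<close>] by blast
  then have "l \<in> X" and "g l \<le> 0"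
    using in_closed_iff_infdist_zero[OF X_closed X_nonempty] infdist_nonneg[of l X]
    by (auto simp: pos_part_fun_def)
  moreover have "x \<longlonglongrightarrow> l"
    using LIMSEQ_if_convergent_dist_subseq fejer_monotone(3)[OF \<open>l \<in> X\<close> \<open>g l \<le> 0\<close> \<beta>_sq]
      \<open>strict_mono r\<close> \<open>(x \<circ> r) \<longlonglongrightarrow> l\<close> by blast
  ultimately show ?thesis
    by blast
qed

end

theorem theorem2:
  fixes g :: "'a::euclidean_space \<Rightarrow> real"
    and X :: "'a set"
    and dg :: "'a \<Rightarrow> 'a"
    and K :: real
    and \<alpha> \<beta> :: "nat \<Rightarrow> real"
    and x \<xi> \<phi> :: "nat \<Rightarrow> 'a"
  assumes g_cont: "continuous_on UNIV g"
    and g_conv: "convex_on UNIV g"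
    and X_closed: "closed X"
    and X_convex: "convex X"
    and Xstar_ne: "{y \<in> X. g y \<le> 0} \<noteq> {}"
    and K_nonneg: "K \<ge> 0"
    and dg_subgrad: "\<And>y. is_subgradient (pos_part_fun g) y (dg y)"
    and dg_bound: "\<And>y. norm (dg y) \<le> K"
    and \<alpha>_range: "\<And>t. 0 \<le> \<alpha> t \<and> \<alpha> t \<le> 1"
    and \<alpha>_div: "\<not> summable \<alpha>"
    and \<alpha>_sq: "summable (\<lambda>t. (\<alpha> t)\<^sup>2)"
    and \<beta>_nonneg: "\<And>t. \<beta> t \<ge> 0"
    and \<beta>_div: "\<not> summable \<beta>"
    and \<beta>_sq: "summable (\<lambda>t. (\<beta> t)\<^sup>2)"
    and \<xi>_def: "\<And>t. \<xi> t = x t - \<beta> t *\<^sub>R dg (x t)"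
    and \<phi>_def: "\<And>t. \<phi> t = \<alpha> t *\<^sub>R (\<xi> t - closest_point X (\<xi> t))"
    and x_step: "\<And>t. x (Suc t) = \<xi> t - \<phi> t"
  shows "\<exists>xs. xs \<in> X \<and> g xs \<le> 0 \<and> x \<longlonglongrightarrow> xs"
proof -
  interpret projected_subgradient_iteration g X dg K \<alpha> \<beta> x \<xi>
    using X_closed X_convex Xstar_ne dg_subgrad dg_bound \<alpha>_range \<beta>_nonneg \<xi>_def
    by unfold_locales (auto simp: x_step \<phi>_def)
  show ?thesis
    using converges_to_feasible_point[OF g_cont _ \<alpha>_div \<beta>_div \<beta>_sq] Xstar_ne by blast
qed

end
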